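(* If $G$ is a connected, claw-free, cubic graph, then $\sigma_{(2,2)}(G) \le \sigma_{(2,3)}(G) + 1$.
   Context: A graph is claw-free if it has no induced subgraph isomorphic to $K_{1,3}$; it is cubic if every vertex has degree $3$. $(p,q)$-spreading: let $p\in\mathbb{N}$ and $q\in\mathbb{N}\cup\{\infty\}$. Start with a set $S\subseteq V(G)$ of blue vertices, all other vertices white. The color change rule: if a white vertex $w$ has at least $p$ blue neighbors, and at least one of the blue neighbors of $w$ has at most $q$ white neighbors, then $w$ is recolored blue. $S$ is a $(p,q)$-spreading set if repeatedly applying this rule eventually colors all vertices blue. $\sigma_{(p,q)}(G)$ is the minimum cardinality of a $(p,q)$-spreading set of $G$. *)

theory Defs
  imports Main "HOL-Library.Extended_Nat"
begin

definition simple_graph :: "'a set \<Rightarrow> ('a \<Rightarrow> 'a \<Rightarrow> bool) \<Rightarrow> bool" where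
  "simple_graph V E \<longleftrightarrow> finite V \<and> (\<forall>u v. E u v \<longrightarrow> u \<in> V \<and> v \<in> V)
     \<and> (\<forall>u v. E u v \<longrightarrow> E v u) \<and> (\<forall>v. \<not> E v v)"

definition nbhd :: "'a set \<Rightarrow> ('a \<Rightarrow> 'a \<Rightarrow> bool) \<Rightarrow> 'a \<Rightarrow> 'a set" where
  "nbhd V E v = {u \<in> V. E v u}"

definition cubic :: "'a set \<Rightarrow> ('a \<Rightarrow> 'a \<Rightarrow> bool) \<Rightarrow> bool" where
  "cubic V E \<longleftrightarrow> (\<forall>v \<in> V. card (nbhd V E v) = 3)"

definition connected_graph :: "'a set \<Rightarrow> ('a \<Rightarrow> 'a \<Rightarrow> bool) \<Rightarrow> bool" where
  "connected_graph V E \<longleftrightarrow> V \<noteq> {} \<and>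
     (\<forall>u \<in> V. \<forall>v \<in> V. (u, v) \<in> {(x, y). E x y}\<^sup>*)"

definition claw_free :: "'a set \<Rightarrow> ('a \<Rightarrow> 'a \<Rightarrow> bool) \<Rightarrow> bool" where
  "claw_free V E \<longleftrightarrow> \<not> (\<exists>c \<in> V. \<exists>a b d. E c a \<and> E c b \<and> E c d \<and>
      a \<noteq> b \<and> a \<noteq> d \<and> b \<noteq> d \<and> \<not> E a b \<and> \<not> E a d \<and> \<not> E b d)"

definition color_change ::
  "'a set \<Rightarrow> ('a \<Rightarrow> 'a \<Rightarrow> bool) \<Rightarrow> nat \<Rightarrow> enat \<Rightarrow> 'a set \<Rightarrow> 'a set \<Rightarrow> bool" where
  "color_change V E p q B B' \<longleftrightarrow> (\<exists>w \<in> V - B. B' = insert w B \<and>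
     p \<le> card (nbhd V E w \<inter> B) \<and>
     (\<exists>u \<in> nbhd V E w \<inter> B. enat (card (nbhd V E u - B)) \<le> q))"

definition spreading_set ::
  "'a set \<Rightarrow> ('a \<Rightarrow> 'a \<Rightarrow> bool) \<Rightarrow> nat \<Rightarrow> enat \<Rightarrow> 'a set \<Rightarrow> bool" where
  "spreading_set V E p q S \<longleftrightarrow> S \<subseteq> V \<and> (color_change V E p q)\<^sup>*\<^sup>* S V"

definition sigma :: "'a set \<Rightarrow> ('a \<Rightarrow> 'a \<Rightarrow> bool) \<Rightarrow> nat \<Rightarrow> enat \<Rightarrow> nat" where
  "sigma V E p q = Min (card ` {S. spreading_set V E p q S})"

end

theory Submission
  imports Defs
begin

text \<open>In a cubic graph a vertex of a triangle has only one neighbour outside the triangle, so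
  under any (2,q)-rule a triangle none of whose vertices is initially blue never receives a blue
  vertex: a (2,q)-spreading set has at least as many vertices as any family of pairwise disjoint
  triangles.

  Conversely, a (2,2)-spreading set is grown greedily. Keep a blue set B in which every vertex
  has a blue neighbour, hence at most two white neighbours, so that every vertex of B can force.
  A white neighbour w of B with a second blue neighbour is forced. Otherwise, by claw-freeness,
  w lies in a triangle either with a vertex of B or with its two white neighbours; adding one
  vertex of that triangle to the initial set turns the whole triangle blue. Every added vertex,
  except the very first one, is paid for by a new triangle disjoint from all earlier ones.\<close>

definition triangle :: "('a \<Rightarrow> 'a \<Rightarrow> bool) \<Rightarrow> 'a set \<Rightarrow> bool" where
  "triangle E D \<longleftrightarrow> (\<exists>a b c. D = {a, b, c} \<and> E a b \<and> E b c \<and> E a c)"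

lemma color_change_rtranclp_insert:
  assumes "(color_change V E p q)\<^sup>*\<^sup>* X Y"
  shows "(color_change V E p q)\<^sup>*\<^sup>* (insert y X) (insert y Y)"
  using assms
proof (induction rule: rtranclp_induct)
  case base
  show ?case by simp
next
  case (step Y Y')
  from step.hyps(2) obtain w u where w: "w \<in> V - Y" "Y' = insert w Y"
    "p \<le> card (nbhd V E w \<inter> Y)" "u \<in> nbhd V E w \<inter> Y"
    "enat (card (nbhd V E u - Y)) \<le> q"
    unfolding color_change_def by blast
  show ?case
  proof (cases "w = y")
    case True
    with step.IH w(2) show ?thesis by simp
  next
    case False
    have "card (nbhd V E w \<inter> Y) \<le> card (nbhd V E w \<inter> insert y Y)"
      by (simp add: Int_insert_right card_insert_le)
    moreover have "card (nbhd V E u - insert y Y) \<le> card (nbhd V E u - Y)"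
      by (metis Diff_insert card_Diff1_le)
    ultimately have "color_change V E p q (insert y Y) (insert y Y')"
      unfolding color_change_def using w False
      by (intro bexI[of _ w]) (auto intro!: bexI[of _ u] order.trans[OF _ w(5)])
    with step.IH show ?thesis by simp
  qed
qed

lemma spreading_set_V: "spreading_set V E p q V"
  by (simp add: spreading_set_def)

lemma finite_spreading_sets:
  assumes "finite V"
  shows "finite {S. spreading_set V E p q S}"
  using assms by (rule rev_finite_subset[OF finite_Pow_iff[THEN iffD2]])
    (auto simp: spreading_set_def)

lemma sigma_le:
  assumes "finite V" "spreading_set V E p q S"
  shows "sigma V E p q \<le> card S"
  unfolding sigma_def using assms finite_spreading_sets[OF assms(1)] by simp

lemma sigma_attained:
  assumes "finite V"
  obtains S where "spreading_set V E p q S" "sigma V E p q = card S"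
proof -
  have "sigma V E p q \<in> card ` {S. spreading_set V E p q S}"
    unfolding sigma_def using finite_spreading_sets[OF assms] spreading_set_V[of V E p q]
    by (intro Min_in) auto
  with that show ?thesis by blast
qed

lemma connected_graph_edge_leaving:
  assumes "connected_graph V E" "b \<in> B" "b \<in> V" "v \<in> V" "v \<notin> B"
  obtains u w where "u \<in> B" "w \<notin> B" "E u w"
proof -
  have "(b, v) \<in> {(x, y). E x y}\<^sup>*"
    using assms(1,3,4) unfolding connected_graph_def by blast
  then have "\<exists>u w. u \<in> B \<and> w \<notin> B \<and> E u w"
    using assms(2,5)
  proof (induction rule: rtrancl_induct)
    case (step x y)
    then show ?case by (cases "x \<in> B") auto
  qed simp
  with that show ?thesis by blast
qed

locale cubic_graph =
  fixes V :: "'a set" and E :: "'a \<Rightarrow> 'a \<Rightarrow> bool"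
  assumes simple: "simple_graph V E" and cubic: "cubic V E"
begin

lemma finite_V: "finite V"
  using simple by (simp add: simple_graph_def)

lemma edge_sym: "E u v \<Longrightarrow> E v u"
  using simple by (simp add: simple_graph_def)

lemma edge_irrefl: "\<not> E v v"
  using simple by (simp add: simple_graph_def)

lemma edge_in_V: "E u v \<Longrightarrow> u \<in> V" "E u v \<Longrightarrow> v \<in> V"
  using simple by (simp_all add: simple_graph_def)

lemma mem_nbhd_iff [simp]: "u \<in> nbhd V E v \<longleftrightarrow> E v u"
  using edge_in_V by (auto simp: nbhd_def)

lemma finite_nbhd: "finite (nbhd V E v)"
  using finite_V by (simp add: nbhd_def)

lemma card_nbhd: "v \<in> V \<Longrightarrow> card (nbhd V E v) = 3"
  using cubic by (simp add: cubic_def)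

lemma card_nbhd_Diff_le_2:
  assumes "E u u'" "u' \<in> B"
  shows "card (nbhd V E u - B) \<le> 2"
proof -
  have "card (nbhd V E u - B) \<le> card (nbhd V E u - {u'})"
    using assms by (intro card_mono) (auto simp: finite_nbhd)
  also have "\<dots> = 2"
    using assms by (simp add: card_nbhd edge_in_V finite_nbhd)
  finally show ?thesis .
qed

lemma color_change_2_2I:
  assumes "w \<in> V" "w \<notin> B" "E w a" "E w b" "a \<noteq> b" "a \<in> B" "b \<in> B" "E a a'" "a' \<in> B"
  shows "color_change V E 2 2 B (insert w B)"
proof -
  have "card {a, b} \<le> card (nbhd V E w \<inter> B)"
    using assms by (intro card_mono) (auto simp: finite_nbhd)
  then have "2 \<le> card (nbhd V E w \<inter> B)"
    using \<open>a \<noteq> b\<close> by simp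
  moreover have "enat (card (nbhd V E a - B)) \<le> 2"
    using card_nbhd_Diff_le_2[OF assms(8,9)] by (simp add: numeral_eq_enat)
  ultimately show ?thesis
    unfolding color_change_def using assms by (intro bexI[of _ w]) auto
qed

lemma triangle_at:
  assumes "triangle E D" "u \<in> D"
  obtains p q where "D = {u, p, q}" "p \<noteq> q" "E u p" "E u q" "E p q"
proof -
  obtain a b c where D: "D = {a, b, c}" "E a b" "E b c" "E a c"
    using assms(1) unfolding triangle_def by blast
  have "a \<noteq> b" "b \<noteq> c" "a \<noteq> c"
    using D edge_irrefl by metis+
  from \<open>u \<in> D\<close> D consider "u = a" | "u = b" | "u = c"
    by blast
  then show thesis
  proof cases
    case 1
    with D \<open>b \<noteq> c\<close> show thesis by (intro that[of b c]) auto
  next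
    case 2
    with D \<open>a \<noteq> c\<close> edge_sym show thesis by (intro that[of a c]) auto
  next
    case 3
    with D \<open>a \<noteq> b\<close> edge_sym show thesis by (intro that[of a b]) auto
  qed
qed

lemma triangle_subset_V: "triangle E D \<Longrightarrow> D \<subseteq> V"
  unfolding triangle_def using edge_in_V by blast

lemma card_nbhd_Diff_triangle:
  assumes "triangle E D" "u \<in> D"
  shows "card (nbhd V E u - D) = 1"
proof -
  obtain p q where D: "D = {u, p, q}" "p \<noteq> q" "E u p" "E u q"
    using triangle_at[OF assms] by blast
  have "nbhd V E u \<inter> D = {p, q}"
    using D edge_irrefl by auto
  then have "card (nbhd V E u - D) = card (nbhd V E u) - card {p, q}"
    by (metis card_Diff_subset_Int finite.emptyI finite.insertI)
  also have "\<dots> = 1"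
    using D(2,3) edge_in_V by (simp add: card_nbhd)
  finally show ?thesis .
qed

lemma spreading_set_meets_triangle:
  assumes "spreading_set V E 2 q S" "triangle E D"
  shows "S \<inter> D \<noteq> {}"
proof
  assume "S \<inter> D = {}"
  have "X \<inter> D = {}" if "(color_change V E 2 q)\<^sup>*\<^sup>* S X" for X
    using that
  proof (induction rule: rtranclp_induct)
    case (step Y Y')
    then obtain w where w: "w \<notin> Y" "Y' = insert w Y" "2 \<le> card (nbhd V E w \<inter> Y)"
      unfolding color_change_def by blast
    have "w \<notin> D"
    proof
      assume "w \<in> D"
      have "card (nbhd V E w \<inter> Y) \<le> card (nbhd V E w - D)"
        using step.IH by (intro card_mono) (auto simp: finite_nbhd)
      with w(3) card_nbhd_Diff_triangle[OF assms(2) \<open>w \<in> D\<close>] show False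
        by simp
    qed
    with step.IH w(2) show ?case by simp
  qed fact
  then have "V \<inter> D = {}"
    using assms(1) unfolding spreading_set_def by blast
  with triangle_subset_V[OF assms(2)] assms(2) show False
    unfolding triangle_def by blast
qed

lemma card_disjoint_triangles_le_sigma:
  assumes "\<forall>D\<in>Ts. triangle E D" "pairwise disjnt Ts"
  shows "card Ts \<le> sigma V E 2 q"
proof -
  obtain S where S: "spreading_set V E 2 q S" "sigma V E 2 q = card S"
    using sigma_attained finite_V by blast
  define pick where "pick D = (SOME s. s \<in> S \<inter> D)" for D
  have pick: "pick D \<in> S \<inter> D" if "D \<in> Ts" for D
  proof -
    have "S \<inter> D \<noteq> {}"
      using spreading_set_meets_triangle[OF S(1)] assms(1) that by blast
    then show ?thesis
      unfolding pick_def by (rule some_in_eq[THEN iffD2])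
  qed
  have "inj_on pick Ts"
  proof (rule inj_onI)
    fix D D' assume "D \<in> Ts" "D' \<in> Ts" "pick D = pick D'"
    then have "\<not> disjnt D D'"
      using pick unfolding disjnt_def by (metis IntD2 disjoint_iff)
    with \<open>D \<in> Ts\<close> \<open>D' \<in> Ts\<close> assms(2) show "D = D'"
      by (meson pairwiseD)
  qed
  moreover have "pick ` Ts \<subseteq> S"
    using pick by blast
  moreover have "finite S"
    using S(1) finite_V unfolding spreading_set_def by (auto intro: finite_subset)
  ultimately show ?thesis
    using S(2) card_inj_on_le by metis
qed

text \<open>T is the initial set, B the blue set it reaches, and Ts the disjoint triangles paying
  for all vertices of T but one.\<close>

definition spread_state :: "'a set \<Rightarrow> 'a set \<Rightarrow> 'a set set \<Rightarrow> bool" where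
  "spread_state T B Ts \<longleftrightarrow> T \<subseteq> B \<and> B \<subseteq> V \<and> (color_change V E 2 2)\<^sup>*\<^sup>* T B \<and>
     (\<forall>v\<in>B. \<exists>u\<in>B. E v u) \<and> (\<forall>D\<in>Ts. triangle E D \<and> D \<subseteq> B) \<and> pairwise disjnt Ts \<and>
     card T = card Ts + 1"

lemma spread_state_triangle:
  assumes "E v a" "E v b" "E a b"
  shows "spread_state {v, a} {v, a, b} {{v, a, b}}"
proof -
  have "v \<noteq> a" "v \<noteq> b" "a \<noteq> b"
    using assms edge_irrefl by metis+
  then have "color_change V E 2 2 {v, a} (insert b {v, a})"
    using assms edge_sym edge_in_V by (intro color_change_2_2I[where a' = a]) auto
  then have "(color_change V E 2 2)\<^sup>*\<^sup>* {v, a} {v, a, b}"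
    by (simp add: insert_commute)
  moreover have "triangle E {v, a, b}"
    unfolding triangle_def using assms by blast
  ultimately show ?thesis
    unfolding spread_state_def using assms edge_sym edge_in_V \<open>v \<noteq> a\<close> by auto
qed

lemma spread_state_insert:
  assumes st: "spread_state T B Ts"
    and "w \<in> V" "w \<notin> B" "E w a" "E w b" "a \<noteq> b" "a \<in> B" "b \<in> B"
  shows "spread_state T (insert w B) Ts"
proof -
  obtain a' where "a' \<in> B" "E a a'"
    using st \<open>a \<in> B\<close> unfolding spread_state_def by blast
  then have "color_change V E 2 2 B (insert w B)"
    using color_change_2_2I[OF assms(2-8)] by blast
  with st show ?thesis
    unfolding spread_state_def using assms edge_sym by auto
qed

lemma spread_state_add_triangle:
  assumes st: "spread_state T B Ts" and D: "triangle E D" "\<forall>D'\<in>Ts. disjnt D D'"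
    and t: "t \<in> D" "t \<notin> B"
    and reach: "(color_change V E 2 2)\<^sup>*\<^sup>* (insert t B) (B \<union> D)"
  shows "spread_state (insert t T) (B \<union> D) (insert D Ts)"
proof -
  have TB: "T \<subseteq> B" "B \<subseteq> V" "(color_change V E 2 2)\<^sup>*\<^sup>* T B"
    and Ts: "\<forall>D'\<in>Ts. triangle E D' \<and> D' \<subseteq> B" "pairwise disjnt Ts"
    and card_T: "card T = card Ts + 1"
    using st unfolding spread_state_def by blast+
  have "(color_change V E 2 2)\<^sup>*\<^sup>* (insert t T) (B \<union> D)"
    using color_change_rtranclp_insert[OF TB(3)] reach by (rule rtranclp_trans)
  moreover have "\<exists>u\<in>B \<union> D. E v u" if "v \<in> B \<union> D" for v
  proof (cases "v \<in> B")
    case True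
    with st show ?thesis
      unfolding spread_state_def by blast
  next
    case False
    with that obtain p q where "D = {v, p, q}" "E v p"
      using triangle_at[OF D(1)] by blast
    then show ?thesis by blast
  qed
  moreover have "pairwise disjnt (insert D Ts)"
    using Ts(2) D(2) by (auto simp: pairwise_insert disjnt_sym)
  moreover have "card (insert t T) = card (insert D Ts) + 1"
  proof -
    have "Ts \<subseteq> Pow V"
      using TB(2) Ts(1) by auto
    then have "finite Ts"
      using finite_V by (simp add: finite_subset)
    moreover have "finite T"
      using TB(1,2) finite_V by (simp add: finite_subset)
    moreover have "t \<notin> T" "D \<notin> Ts"
      using TB Ts(1) t by auto
    ultimately show ?thesis
      using card_T by simp
  qed
  ultimately show ?thesis
    using st triangle_subset_V[OF D(1)] D(1) t
    unfolding spread_state_def by auto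
qed

lemma spread_state_add_triangle_at_blue:
  assumes st: "spread_state T B Ts" and "u \<in> B" "w \<notin> B" "y \<notin> B"
    and "E u w" "E u y" "E w y"
  shows "spread_state (insert w T) (B \<union> {u, w, y}) (insert {u, w, y} Ts)"
proof (rule spread_state_add_triangle[OF st])
  show "triangle E {u, w, y}"
    unfolding triangle_def using assms by blast
  show "\<forall>D\<in>Ts. disjnt {u, w, y} D"
  proof
    fix D assume "D \<in> Ts"
    then have D: "triangle E D" "D \<subseteq> B"
      using st unfolding spread_state_def by blast+
    have "u \<notin> D"
    proof
      assume "u \<in> D"
      have "{w, y} \<subseteq> nbhd V E u - D"
        using assms D(2) by auto
      then have "card {w, y} \<le> 1"
        using card_nbhd_Diff_triangle[OF D(1) \<open>u \<in> D\<close>] finite_nbhd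
        by (metis card_mono finite_Diff)
      moreover have "w \<noteq> y"
        using \<open>E w y\<close> edge_irrefl by blast
      ultimately show False
        by simp
    qed
    with assms D(2) show "disjnt {u, w, y} D"
      by (auto simp: disjnt_def)
  qed
  obtain u' where "u' \<in> B" "E u u'"
    using st \<open>u \<in> B\<close> unfolding spread_state_def by blast
  then have "color_change V E 2 2 (insert w B) (insert y (insert w B))"
    using assms edge_sym edge_in_V edge_irrefl
    by (intro color_change_2_2I[where a = u and b = w and a' = u']) auto
  moreover have "B \<union> {u, w, y} = insert y (insert w B)"
    using \<open>u \<in> B\<close> by auto
  ultimately show "(color_change V E 2 2)\<^sup>*\<^sup>* (insert w B) (B \<union> {u, w, y})"
    by simp
qed (use assms in auto)

lemma spread_state_add_white_triangle:
  assumes st: "spread_state T B Ts" and "u \<in> B" "w \<notin> B" "y \<notin> B" "z \<notin> B"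
    and "E u w" "E w y" "E w z" "E y z"
  shows "spread_state (insert y T) (B \<union> {w, y, z}) (insert {w, y, z} Ts)"
proof (rule spread_state_add_triangle[OF st])
  show "triangle E {w, y, z}"
    unfolding triangle_def using assms by blast
  show "\<forall>D\<in>Ts. disjnt {w, y, z} D"
    using st assms unfolding spread_state_def disjnt_def by blast
  obtain u' where "u' \<in> B" "E u u'"
    using st \<open>u \<in> B\<close> unfolding spread_state_def by blast
  then have "color_change V E 2 2 (insert y B) (insert w (insert y B))"
    using assms edge_sym edge_in_V edge_irrefl
    by (intro color_change_2_2I[where a = u and b = y and a' = u']) auto
  moreover have "color_change V E 2 2 (insert w (insert y B)) (insert z (insert w (insert y B)))"
    using assms edge_sym edge_in_V edge_irrefl
    by (intro color_change_2_2I[where a = w and b = y and a' = u]) auto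
  ultimately show "(color_change V E 2 2)\<^sup>*\<^sup>* (insert y B) (B \<union> {w, y, z})"
    by (simp add: insert_commute)
qed (use assms in auto)

end

locale connected_claw_free_cubic_graph = cubic_graph +
  assumes connected: "connected_graph V E" and claw_free: "claw_free V E"
begin

lemma claw_free_nbhd:
  assumes "E w a" "E w b" "E w c" "a \<noteq> b" "a \<noteq> c" "b \<noteq> c"
  shows "E a b \<or> E a c \<or> E b c"
  using claw_free assms edge_in_V unfolding claw_free_def by blast

lemma spread_state_init:
  obtains T B Ts where "spread_state T B Ts"
proof -
  obtain v where "v \<in> V"
    using connected unfolding connected_graph_def by blast
  then obtain a b c where abc: "nbhd V E v = {a, b, c}" "a \<noteq> b" "b \<noteq> c" "a \<noteq> c"
    using card_nbhd by (metis card_3_iff)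
  then have "E v a" "E v b" "E v c"
    by (metis insertI1 insertI2 mem_nbhd_iff)+
  with abc(2-4) consider "E a b" | "E a c" | "E b c"
    using claw_free_nbhd by blast
  then show thesis
    using spread_state_triangle that \<open>E v a\<close> \<open>E v b\<close> \<open>E v c\<close> by cases blast+
qed

lemma spread_state_extend:
  assumes st: "spread_state T B Ts" and u: "u \<in> B" "E u w" and w: "w \<notin> B"
  obtains T' B' Ts' where "spread_state T' B' Ts'" "insert w B \<subseteq> B'"
proof -
  have "w \<in> V" "E w u"
    using u edge_in_V edge_sym by blast+
  then have "card (nbhd V E w - {u}) = 2"
    by (simp add: card_nbhd finite_nbhd)
  then obtain y z where yz: "nbhd V E w - {u} = {y, z}" "y \<noteq> z"
    unfolding card_2_iff by blast
  then have "y \<in> nbhd V E w - {u}" "z \<in> nbhd V E w - {u}"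
    by blast+
  then have "E w y" "E w z" "u \<noteq> y" "u \<noteq> z"
    by auto
  consider "y \<in> B" | "z \<in> B" | "y \<notin> B" "z \<notin> B"
    by blast
  then show thesis
  proof cases
    case 1
    show thesis
      by (rule that[OF spread_state_insert[OF st \<open>w \<in> V\<close> w \<open>E w u\<close> \<open>E w y\<close> \<open>u \<noteq> y\<close> u(1) 1]])
        auto
  next
    case 2
    show thesis
      by (rule that[OF spread_state_insert[OF st \<open>w \<in> V\<close> w \<open>E w u\<close> \<open>E w z\<close> \<open>u \<noteq> z\<close> u(1) 2]])
        auto
  next
    case 3
    have "E u y \<or> E u z \<or> E y z"
      using claw_free_nbhd \<open>E w u\<close> \<open>E w y\<close> \<open>E w z\<close> \<open>u \<noteq> y\<close> \<open>u \<noteq> z\<close> yz(2) by blast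
    then show thesis
    proof (elim disjE)
      assume "E u y"
      show thesis
        by (rule that[OF spread_state_add_triangle_at_blue[OF st u(1) w 3(1) u(2) \<open>E u y\<close> \<open>E w y\<close>]])
          auto
    next
      assume "E u z"
      show thesis
        by (rule that[OF spread_state_add_triangle_at_blue[OF st u(1) w 3(2) u(2) \<open>E u z\<close> \<open>E w z\<close>]])
          auto
    next
      assume "E y z"
      show thesis
        by (rule that[OF spread_state_add_white_triangle[OF st u(1) w 3 u(2) \<open>E w y\<close> \<open>E w z\<close> \<open>E y z\<close>]])
          auto
    qed
  qed
qed

lemma spread_state_grow:
  assumes st: "spread_state T B Ts" and "B \<noteq> V"
  obtains T' B' Ts' where "spread_state T' B' Ts'" "B \<subset> B'"
proof -
  have "T \<noteq> {}" "T \<subseteq> B" "B \<subseteq> V"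
    using st unfolding spread_state_def by auto
  then obtain b v where "b \<in> B" "b \<in> V" "v \<in> V" "v \<notin> B"
    using \<open>B \<noteq> V\<close> by blast
  then obtain u w where "u \<in> B" "E u w" "w \<notin> B"
    using connected_graph_edge_leaving[OF connected] by blast
  with st obtain T' B' Ts' where "spread_state T' B' Ts'" "insert w B \<subseteq> B'"
    by (rule spread_state_extend)
  with \<open>w \<notin> B\<close> that show thesis
    by blast
qed

lemma spread_state_reaches_V:
  "spread_state T B Ts \<Longrightarrow> \<exists>T' Ts'. spread_state T' V Ts'"
proof (induction "card (V - B)" arbitrary: T B Ts rule: less_induct)
  case less
  show ?case
  proof (cases "B = V")
    case True
    with less.prems show ?thesis by blast
  next
    case False
    with less.prems obtain T' B' Ts' where st': "spread_state T' B' Ts'" "B \<subset> B'"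
      by (rule spread_state_grow)
    then have "V - B' \<subset> V - B"
      unfolding spread_state_def by blast
    then have "card (V - B') < card (V - B)"
      using finite_V by (simp add: psubset_card_mono)
    with less.hyps st'(1) show ?thesis by blast
  qed
qed

lemma sigma_2_2_le_disjoint_triangles:
  obtains Ts where "\<forall>D\<in>Ts. triangle E D" "pairwise disjnt Ts" "sigma V E 2 2 \<le> card Ts + 1"
proof -
  obtain T0 B0 Ts0 where "spread_state T0 B0 Ts0"
    by (rule spread_state_init)
  then obtain T Ts where st: "spread_state T V Ts"
    using spread_state_reaches_V by blast
  then have "spreading_set V E 2 2 T"
    unfolding spread_state_def spreading_set_def by blast
  then have "sigma V E 2 2 \<le> card T"
    by (rule sigma_le[OF finite_V])
  with st that show thesis
    unfolding spread_state_def by auto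
qed

end

theorem proposition4p7:
  fixes V :: "'a set" and E :: "'a \<Rightarrow> 'a \<Rightarrow> bool"
  assumes "simple_graph V E"
      and "connected_graph V E"
      and "claw_free V E"
      and "cubic V E"
  shows "sigma V E 2 2 \<le> sigma V E 2 3 + 1"
proof -
  interpret connected_claw_free_cubic_graph V E
    by unfold_locales (fact assms)+
  obtain Ts where Ts: "\<forall>D\<in>Ts. triangle E D" "pairwise disjnt Ts" "sigma V E 2 2 \<le> card Ts + 1"
    by (rule sigma_2_2_le_disjoint_triangles)
  then have "card Ts \<le> sigma V E 2 3"
    by (intro card_disjoint_triangles_le_sigma)
  with Ts(3) show ?thesis
    by simp
qed

end
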